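(* Let $X$ be a locally Menger Hausdorff $P$-space, let $Y$ be a $P$-space, and let $q:Y\to Z$ be a quotient mapping. Then the mapping $f:X\times Y\to X\times Z$ given by $f(x,y)=(x,q(y))$ is a quotient mapping.
   Context: A $P$-space is a space in which every countable intersection of open sets is open. A space $X$ is Menger if for each sequence $(\mathcal{U}_n)$ of open covers of $X$ there is a sequence $(\mathcal{V}_n)$ with each $\mathcal{V}_n$ a finite subset of $\mathcal{U}_n$ and $\bigcup_{n}\bigcup\mathcal{V}_n=X$. A space $X$ is locally Menger if for each $x\in X$ there exist an open set $U$ and a Menger subspace $Y$ of $X$ with $x\in U\subseteq Y$. *)

theory Defs
  imports "HOL-Analysis.Analysis"
begin

text \<open>P-space: every countable intersection of open sets is open
  (intersection taken inside the underlying space, so the empty family is harmless).\<close>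
definition p_space :: "'a topology \<Rightarrow> bool" where
  "p_space X \<longleftrightarrow>
     (\<forall>\<F>. countable \<F> \<and> (\<forall>U\<in>\<F>. openin X U) \<longrightarrow> openin X (topspace X \<inter> \<Inter>\<F>))"

definition menger_space :: "'a topology \<Rightarrow> bool" where
  "menger_space X \<longleftrightarrow>
     (\<forall>\<U> :: nat \<Rightarrow> 'a set set.
        (\<forall>n. (\<forall>U\<in>\<U> n. openin X U) \<and> topspace X \<subseteq> \<Union>(\<U> n)) \<longrightarrow>
        (\<exists>\<V> :: nat \<Rightarrow> 'a set set.
           (\<forall>n. finite (\<V> n) \<and> \<V> n \<subseteq> \<U> n) \<and> topspace X \<subseteq> (\<Union>n. \<Union>(\<V> n))))"

definition locally_menger :: "'a topology \<Rightarrow> bool" where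
  "locally_menger X \<longleftrightarrow>
     (\<forall>x\<in>topspace X. \<exists>U Y. openin X U \<and> Y \<subseteq> topspace X \<and>
        menger_space (subtopology X Y) \<and> x \<in> U \<and> U \<subseteq> Y)"

end

theory Submission
  imports Defs
begin

text \<open>The classical proof that \<open>id \<times> q\<close> is quotient for locally compact regular \<open>X\<close>
  (\<open>quotient_map_prod_right\<close>) uses compactness only through the tube lemma. When \<open>Y\<close> is a
  P-space, Lindelof subsets of \<open>X\<close> serve equally well: a countable subcover yields countably
  many tubes, and their intersection is open. A locally Menger Hausdorff P-space has a
  neighbourhood base of Lindelof sets, because Menger sets are Lindelof and a Hausdorff P-space
  separates a Lindelof set from a point outside it.\<close>

lemma p_space_openin_INT:
  assumes "p_space X" "countable C" "\<And>c. c \<in> C \<Longrightarrow> openin X (B c)"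
  shows "openin X (topspace X \<inter> (\<Inter>c\<in>C. B c))"
  using assms(1)[unfolded p_space_def, rule_format, of "B ` C"] assms(2,3) by auto

lemma menger_imp_Lindelof_space:
  assumes "menger_space X"
  shows "Lindelof_space X"
  unfolding Lindelof_space_alt
proof (intro allI impI)
  fix \<U> assume "(\<forall>U\<in>\<U>. openin X U) \<and> topspace X \<subseteq> \<Union>\<U>"
  then have "\<exists>\<V> :: nat \<Rightarrow> 'a set set. (\<forall>n. finite (\<V> n) \<and> \<V> n \<subseteq> \<U>)
      \<and> topspace X \<subseteq> (\<Union>n. \<Union>(\<V> n))"
    using mp[OF spec[OF assms[unfolded menger_space_def], of "\<lambda>_. \<U>"]] by simp
  then obtain \<V> :: "nat \<Rightarrow> 'a set set"
    where \<V>: "\<forall>n. finite (\<V> n) \<and> \<V> n \<subseteq> \<U>" "topspace X \<subseteq> (\<Union>n. \<Union>(\<V> n))"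
    by blast
  have "countable (\<Union>n. \<V> n)"
    using \<V>(1) by (intro countable_UN) (auto intro: countable_finite)
  moreover have "(\<Union>n. \<V> n) \<subseteq> \<U>"
    using \<V>(1) by blast
  moreover have "topspace X \<subseteq> \<Union>(\<Union>n. \<V> n)"
    using \<V>(2) by (rule order.trans) blast
  ultimately show "\<exists>\<W>. countable \<W> \<and> \<W> \<subseteq> \<U> \<and> topspace X \<subseteq> \<Union>\<W>"
    by blast
qed

lemma Lindelof_space_subtopology_countable_pointed_cover:
  assumes "Lindelof_space (subtopology X K)" "K \<subseteq> topspace X"
    and "\<And>x. x \<in> K \<Longrightarrow> openin X (A x) \<and> x \<in> A x"
  obtains C where "C \<subseteq> K" "countable C" "K \<subseteq> \<Union>(A ` C)"
proof -
  have "\<exists>\<V>. countable \<V> \<and> \<V> \<subseteq> A ` K \<and> K \<subseteq> \<Union>\<V>"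
    using assms(1)[unfolded Lindelof_space_subtopology_subset[OF assms(2)], rule_format, of "A ` K"]
      assms(3) by blast
  then show ?thesis
    using that unfolding ex_countable_subset_image by blast
qed

lemma Lindelof_space_subtopology_Int_closedin:
  assumes "Lindelof_space (subtopology X K)" "closedin X C"
  shows "Lindelof_space (subtopology X (K \<inter> C))"
proof -
  have "Lindelof_space (subtopology (subtopology X K) (K \<inter> C))"
    using assms by (simp add: Lindelof_space_closedin_subtopology closedin_subtopology_Int_closed)
  then show ?thesis
    by (simp add: subtopology_subtopology)
qed

lemma Hausdorff_p_space_separate_Lindelof:
  assumes "Hausdorff_space X" "p_space X"
    and "Lindelof_space (subtopology X K)" "K \<subseteq> topspace X" "x \<in> topspace X" "x \<notin> K"
  obtains A B where "openin X A" "openin X B" "K \<subseteq> A" "x \<in> B" "disjnt A B"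
proof -
  have "\<exists>A B. openin X A \<and> openin X B \<and> k \<in> A \<and> x \<in> B \<and> disjnt A B" if "k \<in> K" for k
    using assms(1)[unfolded Hausdorff_space_def, rule_format, of k x] assms(4-6) that by blast
  then obtain A B where AB: "\<And>k. k \<in> K \<Longrightarrow>
      openin X (A k) \<and> openin X (B k) \<and> k \<in> A k \<and> x \<in> B k \<and> disjnt (A k) (B k)"
    by metis
  obtain C where C: "C \<subseteq> K" "countable C" "K \<subseteq> \<Union>(A ` C)"
    by (rule Lindelof_space_subtopology_countable_pointed_cover[OF assms(3,4), where A=A])
      (use AB in auto)
  show ?thesis
  proof
    show "openin X (\<Union>(A ` C))" "K \<subseteq> \<Union>(A ` C)"
      using C AB by auto
    show "openin X (topspace X \<inter> (\<Inter>c\<in>C. B c))"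
      using C AB by (intro p_space_openin_INT[OF assms(2)]) auto
    show "x \<in> topspace X \<inter> (\<Inter>c\<in>C. B c)"
      using C AB assms(5) by auto
    show "disjnt (\<Union>(A ` C)) (topspace X \<inter> (\<Inter>c\<in>C. B c))"
      using C AB unfolding disjnt_def by blast
  qed
qed

lemma locally_menger_Hausdorff_p_space_Lindelof_base:
  assumes "locally_menger X" "Hausdorff_space X" "p_space X"
  shows "neighbourhood_base_of (\<lambda>K. Lindelof_space (subtopology X K)) X"
  unfolding neighbourhood_base_of
proof (intro allI impI, elim conjE)
  fix W x assume W: "openin X W" and "x \<in> W"
  then have x: "x \<in> topspace X"
    using openin_subset by blast
  obtain U M where UM: "openin X U" "M \<subseteq> topspace X" "x \<in> U" "U \<subseteq> M"
    and "menger_space (subtopology X M)"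
    using assms(1)[unfolded locally_menger_def, rule_format, OF x] by blast
  then have M: "Lindelof_space (subtopology X M)"
    by (simp add: menger_imp_Lindelof_space)
  then have "Lindelof_space (subtopology X (M \<inter> (topspace X - W)))"
    using W by (simp add: Lindelof_space_subtopology_Int_closedin closedin_diff)
  then obtain A B where AB: "openin X A" "openin X B" "M \<inter> (topspace X - W) \<subseteq> A" "x \<in> B"
      "disjnt A B"
    using Hausdorff_p_space_separate_Lindelof[OF assms(2,3)] x \<open>x \<in> W\<close> by blast
  show "\<exists>U K. openin X U \<and> Lindelof_space (subtopology X K) \<and> x \<in> U \<and> U \<subseteq> K \<and> K \<subseteq> W"
  proof (intro exI conjI)
    show "Lindelof_space (subtopology X (M \<inter> (topspace X - A)))"
      using M AB by (simp add: Lindelof_space_subtopology_Int_closedin closedin_diff)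
    show "openin X (U \<inter> B)" "x \<in> U \<inter> B"
      using UM AB by auto
    show "U \<inter> B \<subseteq> M \<inter> (topspace X - A)" "M \<inter> (topspace X - A) \<subseteq> W"
      using UM AB openin_subset by (auto simp: disjnt_def)
  qed
qed

lemma Lindelof_p_space_tube:
  assumes "Lindelof_space (subtopology X K)" "K \<subseteq> topspace X" "p_space Y"
    and "openin (prod_topology X Y) G" "K \<times> {y} \<subseteq> G" "y \<in> topspace Y"
  obtains V where "openin Y V" "y \<in> V" "K \<times> V \<subseteq> G"
proof -
  have "\<forall>x\<in>K. \<exists>U V. openin X U \<and> openin Y V \<and> x \<in> U \<and> y \<in> V \<and> U \<times> V \<subseteq> G"
    using assms(4,5) unfolding openin_prod_topology_alt by blast
  then obtain U V where UV: "\<And>x. x \<in> K \<Longrightarrow>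
      openin X (U x) \<and> openin Y (V x) \<and> x \<in> U x \<and> y \<in> V x \<and> U x \<times> V x \<subseteq> G"
    by metis
  obtain C where C: "C \<subseteq> K" "countable C" "K \<subseteq> \<Union>(U ` C)"
    by (rule Lindelof_space_subtopology_countable_pointed_cover[OF assms(1,2), where A=U])
      (use UV in auto)
  show ?thesis
  proof
    show "openin Y (topspace Y \<inter> (\<Inter>c\<in>C. V c))"
      using C UV by (intro p_space_openin_INT[OF assms(3)]) auto
    show "y \<in> topspace Y \<inter> (\<Inter>c\<in>C. V c)"
      using C UV assms(6) by auto
    show "K \<times> (topspace Y \<inter> (\<Inter>c\<in>C. V c)) \<subseteq> G"
    proof
      fix p assume "p \<in> K \<times> (topspace Y \<inter> (\<Inter>c\<in>C. V c))"
      then obtain a b c where "p = (a, b)" "c \<in> C" "a \<in> U c" "b \<in> V c"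
        using C(3) by blast
      then show "p \<in> G"
        using UV[of c] C(1) by blast
    qed
  qed
qed

lemma Lindelof_p_space_quotient_slices_openin:
  assumes K: "Lindelof_space (subtopology X K)" "K \<subseteq> topspace X"
    and "p_space Y" and q: "quotient_map Y Z q"
    and G: "openin (prod_topology X Y) {u \<in> topspace (prod_topology X Y). (\<lambda>(x, y). (x, q y)) u \<in> W}"
  shows "openin Z {z \<in> topspace Z. K \<times> {z} \<subseteq> W}"
proof -
  let ?G = "{u \<in> topspace (prod_topology X Y). (\<lambda>(x, y). (x, q y)) u \<in> W}"
    and ?S = "{z \<in> topspace Z. K \<times> {z} \<subseteq> W}"
  have "openin Y {y \<in> topspace Y. q y \<in> ?S}"
  proof (subst openin_subopen, intro ballI)
    fix y assume y: "y \<in> {y \<in> topspace Y. q y \<in> ?S}"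
    then have "K \<times> {y} \<subseteq> ?G"
      using K(2) by auto
    then obtain V where V: "openin Y V" "y \<in> V" "K \<times> V \<subseteq> ?G"
      using Lindelof_p_space_tube[OF K \<open>p_space Y\<close> G] y by blast
    have "V \<subseteq> {y \<in> topspace Y. q y \<in> ?S}"
    proof
      fix v assume "v \<in> V"
      then have "v \<in> topspace Y"
        using V(1) openin_subset by blast
      moreover have "K \<times> {q v} \<subseteq> W"
        using V(3) \<open>v \<in> V\<close> by force
      ultimately show "v \<in> {y \<in> topspace Y. q y \<in> ?S}"
        using quotient_imp_surjective_map[OF q] by auto
    qed
    then show "\<exists>T. openin Y T \<and> y \<in> T \<and> T \<subseteq> {y \<in> topspace Y. q y \<in> ?S}"
      using V by blast
  qed
  moreover have "?S \<subseteq> topspace Z"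
    by blast
  ultimately show ?thesis
    using q[unfolded quotient_map_def, THEN conjunct2, rule_format, of ?S] by blast
qed

lemma openin_prod_topology_quotient_Lindelof_base:
  assumes base: "neighbourhood_base_of (\<lambda>K. Lindelof_space (subtopology X K)) X"
    and "p_space Y" and q: "quotient_map Y Z q"
    and W: "W \<subseteq> topspace (prod_topology X Z)"
    and G: "openin (prod_topology X Y) {u \<in> topspace (prod_topology X Y). (\<lambda>(x, y). (x, q y)) u \<in> W}"
  shows "openin (prod_topology X Z) W"
proof (subst openin_subopen, intro ballI)
  fix w assume "w \<in> W"
  then obtain x0 z0 where w: "w = (x0, z0)" "(x0, z0) \<in> W"
    by (metis surj_pair)
  then have "z0 \<in> q ` topspace Y"
    using W quotient_imp_surjective_map[OF q] by auto
  then obtain y0 where y0: "y0 \<in> topspace Y" "q y0 = z0"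
    by blast
  have "continuous_map X (prod_topology X Y) (\<lambda>x. (x, y0))"
    by (simp add: continuous_map_paired y0)
  from openin_continuous_map_preimage[OF this G]
  have "openin X {x \<in> topspace X. (x, z0) \<in> W}"
    using y0 by simp
  moreover have "x0 \<in> {x \<in> topspace X. (x, z0) \<in> W}"
    using W w by auto
  ultimately obtain U K where UK: "openin X U" "Lindelof_space (subtopology X K)" "x0 \<in> U"
      "U \<subseteq> K" "K \<subseteq> {x \<in> topspace X. (x, z0) \<in> W}"
    using base[unfolded neighbourhood_base_of, rule_format, of _ x0] by meson
  define S where "S = {z \<in> topspace Z. K \<times> {z} \<subseteq> W}"
  have "openin Z S"
    unfolding S_def using UK
    by (intro Lindelof_p_space_quotient_slices_openin[OF _ _ \<open>p_space Y\<close> q G]) auto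
  moreover have "z0 \<in> S" "U \<times> S \<subseteq> W"
    using UK(4,5) W w by (auto simp: S_def)
  ultimately show "\<exists>T. openin (prod_topology X Z) T \<and> w \<in> T \<and> T \<subseteq> W"
    using UK(1,3) w(1) by (intro exI[of _ "U \<times> S"]) (simp add: openin_prod_Times_iff)
qed

proposition quotient_map_prod_right_Lindelof_base:
  assumes base: "neighbourhood_base_of (\<lambda>K. Lindelof_space (subtopology X K)) X"
    and "p_space Y" and q: "quotient_map Y Z q"
  shows "quotient_map (prod_topology X Y) (prod_topology X Z) (\<lambda>(x, y). (x, q y))"
proof -
  let ?f = "\<lambda>(x, y). (x, q y)"
  have "map_prod id q ` (topspace X \<times> topspace Y) = topspace X \<times> topspace Z"
    using quotient_imp_surjective_map[OF q] by (intro map_prod_surj_on) simp_all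
  then have surj: "?f ` topspace (prod_topology X Y) = topspace (prod_topology X Z)"
    by (simp add: map_prod_def)
  have "continuous_map Y Z q"
    using q by (rule quotient_imp_continuous_map)
  then have cont: "continuous_map (prod_topology X Y) (prod_topology X Z) ?f"
    using continuous_map_prod_top[of X Y X Z id q] by (simp add: id_def)
  show ?thesis
    unfolding quotient_map_def
  proof (intro conjI allI impI iffI)
    fix W assume "W \<subseteq> topspace (prod_topology X Z)"
      and "openin (prod_topology X Y) {u \<in> topspace (prod_topology X Y). ?f u \<in> W}"
    then show "openin (prod_topology X Z) W"
      by (rule openin_prod_topology_quotient_Lindelof_base[OF base \<open>p_space Y\<close> q])
  next
    fix W assume "openin (prod_topology X Z) W"
    then show "openin (prod_topology X Y) {u \<in> topspace (prod_topology X Y). ?f u \<in> W}"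
      by (rule openin_continuous_map_preimage[OF cont])
  qed (rule surj)
qed

theorem theorem4p16:
  fixes X :: "'a topology" and Y :: "'b topology" and Z :: "'c topology"
    and q :: "'b \<Rightarrow> 'c"
  assumes "locally_menger X" and "Hausdorff_space X" and "p_space X"
    and "p_space Y"
    and "quotient_map Y Z q"
  shows "quotient_map (prod_topology X Y) (prod_topology X Z) (\<lambda>(x, y). (x, q y))"
  by (rule quotient_map_prod_right_Lindelof_base
      [OF locally_menger_Hausdorff_p_space_Lindelof_base[OF assms(1-3)] assms(4,5)])

end
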